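(* Let $P$ be a weakly ranked poset, let $\kappa$ be a $P$-kernel, and let $f,g\in\mathscr{I}_{1/2}(P)$ be its right and left KLS-functions. Suppose $x\in P$ and $h\in\mathscr{I}_{1/2}(P)$ satisfy $(\bar h f)_{xz}(t)=(h\bar f)_{xz}(t)$ for all $z\ge x$. Then $h_{xz}(t)=g_{xz}(t)$ for all $z\ge x$.
   Context: A weakly ranked poset is a locally finite poset $P$ (all intervals finite) with a weak rank function: integers $r_{xy}$ for $x\le y$ with $r_{xy}>0$ for $x<y$ and $r_{xy}+r_{yz}=r_{xz}$. $I(P)=\prod_{x\le y}\mathbb{Z}[t]$ with components $f_{xy}(t)$ is a ring under convolution $(fg)_{xz}=\sum_{x\le y\le z}f_{xy}g_{yz}$ with identity $\delta$ ($\delta_{xx}=1$, $\delta_{xy}=0$ for $x<y$). $\mathscr{I}(P)$ is the subring of $f$ with $\deg f_{xy}\le r_{xy}$; it has the involution $\bar f_{xy}(t)=t^{r_{xy}}f_{xy}(t^{-1})$. $\mathscr{I}_{1/2}(P)$ is the set of $f\in\mathscr{I}(P)$ with $f_{xx}=1$ for all $x$ and $\deg f_{xy}<r_{xy}/2$ for $x<y$. A $P$-kernel is $\kappa\in\mathscr{I}(P)$ with $\kappa_{xx}=1$ for all $x$ and $\kappa^{-1}=\bar\kappa$. For a $P$-kernel $\kappa$ there are unique $f,g\in\mathscr{I}_{1/2}(P)$ with $\bar f=\kappa f$ and $\bar g=g\kappa$; $f$ is the right and $g$ the left KLS-function of $\kappa$. *)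

theory Defs
  imports "HOL-Computational_Algebra.Polynomial"
begin

text \<open>The poset P is the carrier type 'a with its order. Elements of the incidence
algebra I(P) are functions 'a => 'a => int poly; only the components f x y with
x \<le> y are meaningful.\<close>

definition locally_finite :: "'a::order itself \<Rightarrow> bool" where
  "locally_finite _ \<longleftrightarrow> (\<forall>x y::'a. finite {x..y})"

definition weak_rank :: "('a::order \<Rightarrow> 'a \<Rightarrow> int) \<Rightarrow> bool" where
  "weak_rank r \<longleftrightarrow> (\<forall>x y. x < y \<longrightarrow> r x y > 0) \<and>
     (\<forall>x y z. x \<le> y \<longrightarrow> y \<le> z \<longrightarrow> r x y + r y z = r x z)"

definition weakly_ranked_poset :: "('a::order \<Rightarrow> 'a \<Rightarrow> int) \<Rightarrow> bool" where
  "weakly_ranked_poset r \<longleftrightarrow> locally_finite TYPE('a) \<and> weak_rank r"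

definition conv :: "('a::order \<Rightarrow> 'a \<Rightarrow> int poly) \<Rightarrow> ('a \<Rightarrow> 'a \<Rightarrow> int poly) \<Rightarrow> 'a \<Rightarrow> 'a \<Rightarrow> int poly" where
  "conv f g x z = (\<Sum>y\<in>{x..z}. f x y * g y z)"

definition delta :: "'a \<Rightarrow> 'a \<Rightarrow> int poly" where
  "delta x y = (if x = y then 1 else 0)"

text \<open>Involution: bar f_{xy}(t) = t^{r_{xy}} f_{xy}(t^{-1}) (for deg f_{xy} \<le> r_{xy}).\<close>
definition bar :: "('a \<Rightarrow> 'a \<Rightarrow> int) \<Rightarrow> ('a \<Rightarrow> 'a \<Rightarrow> int poly) \<Rightarrow> 'a \<Rightarrow> 'a \<Rightarrow> int poly" where
  "bar r f x y = (\<Sum>k\<le>nat (r x y). monom (coeff (f x y) (nat (r x y) - k)) k)"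

definition in_I :: "('a::order \<Rightarrow> 'a \<Rightarrow> int) \<Rightarrow> ('a \<Rightarrow> 'a \<Rightarrow> int poly) \<Rightarrow> bool" where
  "in_I r f \<longleftrightarrow> (\<forall>x y. x \<le> y \<longrightarrow> int (degree (f x y)) \<le> r x y)"

definition in_I_half :: "('a::order \<Rightarrow> 'a \<Rightarrow> int) \<Rightarrow> ('a \<Rightarrow> 'a \<Rightarrow> int poly) \<Rightarrow> bool" where
  "in_I_half r f \<longleftrightarrow> in_I r f \<and> (\<forall>x. f x x = 1) \<and>
     (\<forall>x y. x < y \<longrightarrow> 2 * int (degree (f x y)) < r x y)"

definition P_kernel :: "('a::order \<Rightarrow> 'a \<Rightarrow> int) \<Rightarrow> ('a \<Rightarrow> 'a \<Rightarrow> int poly) \<Rightarrow> bool" where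
  "P_kernel r \<kappa> \<longleftrightarrow> in_I r \<kappa> \<and> (\<forall>x. \<kappa> x x = 1) \<and>
     (\<forall>x y. x \<le> y \<longrightarrow> conv \<kappa> (bar r \<kappa>) x y = delta x y \<and> conv (bar r \<kappa>) \<kappa> x y = delta x y)"

definition right_KLS :: "('a::order \<Rightarrow> 'a \<Rightarrow> int) \<Rightarrow> ('a \<Rightarrow> 'a \<Rightarrow> int poly) \<Rightarrow> ('a \<Rightarrow> 'a \<Rightarrow> int poly) \<Rightarrow> bool" where
  "right_KLS r \<kappa> f \<longleftrightarrow> in_I_half r f \<and> (\<forall>x y. x \<le> y \<longrightarrow> bar r f x y = conv \<kappa> f x y)"

definition left_KLS :: "('a::order \<Rightarrow> 'a \<Rightarrow> int) \<Rightarrow> ('a \<Rightarrow> 'a \<Rightarrow> int poly) \<Rightarrow> ('a \<Rightarrow> 'a \<Rightarrow> int poly) \<Rightarrow> bool" where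
  "left_KLS r \<kappa> g \<longleftrightarrow> in_I_half r g \<and> (\<forall>x y. x \<le> y \<longrightarrow> bar r g x y = conv g \<kappa> x y)"

end

theory Submission
  imports Defs
begin

text \<open>Associativity turns the hypothesis into \<open>(bar h) f = (h \<kappa>) f\<close> on row \<open>x\<close>, and since
  \<open>f\<close> is unitriangular it can be cancelled, so row \<open>x\<close> of \<open>h\<close> satisfies the defining equation
  \<open>bar h = h \<kappa>\<close> of the left KLS-function. Uniqueness then runs along the row: if \<open>h\<close> and \<open>g\<close>
  agree strictly below \<open>z\<close>, the polynomial \<open>p = h\<^sub>x\<^sub>z - g\<^sub>x\<^sub>z\<close> satisfies \<open>bar p = p\<close>, impossible for
  a nonzero polynomial of degree below \<open>r\<^sub>x\<^sub>z / 2\<close>.\<close>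

lemma conv_assoc:
  fixes a b c :: "'a::order \<Rightarrow> 'a \<Rightarrow> int poly"
  assumes fin: "\<And>u v::'a. finite {u..v}"
  shows "conv a (conv b c) x z = conv (conv a b) c x z"
proof -
  have "conv a (conv b c) x z = (\<Sum>y\<in>{x..z}. \<Sum>w\<in>{w. w \<in> {x..z} \<and> y \<le> w}. a x y * b y w * c w z)"
    unfolding conv_def
  proof (rule sum.cong[OF refl])
    fix y assume "y \<in> {x..z}"
    then have "{w. w \<in> {x..z} \<and> y \<le> w} = {y..z}" by auto
    then show "a x y * (\<Sum>w\<in>{y..z}. b y w * c w z) =
               (\<Sum>w\<in>{w. w \<in> {x..z} \<and> y \<le> w}. a x y * b y w * c w z)"
      by (simp add: sum_distrib_left mult.assoc)
  qed
  also have "\<dots> = (\<Sum>w\<in>{x..z}. \<Sum>y\<in>{y. y \<in> {x..z} \<and> y \<le> w}. a x y * b y w * c w z)"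
    by (rule sum.swap_restrict[OF fin fin])
  also have "\<dots> = conv (conv a b) c x z"
    unfolding conv_def
  proof (rule sum.cong[OF refl])
    fix w assume "w \<in> {x..z}"
    then have "{y. y \<in> {x..z} \<and> y \<le> w} = {x..w}" by auto
    then show "(\<Sum>y\<in>{y. y \<in> {x..z} \<and> y \<le> w}. a x y * b y w * c w z) =
               (\<Sum>y\<in>{x..w}. a x y * b y w) * c w z"
      by (simp add: sum_distrib_right)
  qed
  finally show ?thesis .
qed

lemma interval_induct [consumes 2, case_names less]:
  fixes x z :: "'a::order"
  assumes fin: "\<And>u v::'a. finite {u..v}"
    and "x \<le> z"
    and step: "\<And>z. x \<le> z \<Longrightarrow> (\<And>y. x \<le> y \<Longrightarrow> y < z \<Longrightarrow> P y) \<Longrightarrow> P z"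
  shows "P z"
  using assms(2)
proof (induction z rule: measure_induct_rule[where f="\<lambda>z. card {x..z}"])
  case (less z)
  show ?case
  proof (rule step[OF less.prems])
    fix y assume y: "x \<le> y" "y < z"
    then have "{x..y} \<subset> {x..z}" by auto
    then have "card {x..y} < card {x..z}" by (rule psubset_card_mono[OF fin])
    then show "P y" using less.IH y by blast
  qed
qed

lemma conv_diff_eq_top_term:
  fixes a b c :: "'a::order \<Rightarrow> 'a \<Rightarrow> int poly"
  assumes fin: "\<And>u v::'a. finite {u..v}"
    and "x \<le> z"
    and agree: "\<And>y. x \<le> y \<Longrightarrow> y < z \<Longrightarrow> a x y = b x y"
    and unit: "c z z = 1"
  shows "conv a c x z - conv b c x z = a x z - b x z"
proof -
  have "conv a c x z - conv b c x z = (\<Sum>y\<in>{x..z}. (a x y - b x y) * c y z)"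
    unfolding conv_def by (simp add: sum_subtractf[symmetric] left_diff_distrib)
  also have "\<dots> = (a x z - b x z) * c z z + (\<Sum>y\<in>{x..z} - {z}. (a x y - b x y) * c y z)"
    using \<open>x \<le> z\<close> by (subst sum.remove[OF fin, of z]) auto
  also have "(\<Sum>y\<in>{x..z} - {z}. (a x y - b x y) * c y z) = 0"
    by (rule sum.neutral) (auto simp: agree order.strict_iff_order)
  finally show ?thesis using unit by simp
qed

lemma conv_cancel_right_row:
  fixes a b c :: "'a::order \<Rightarrow> 'a \<Rightarrow> int poly"
  assumes fin: "\<And>u v::'a. finite {u..v}"
    and unit: "\<And>y. c y y = 1"
    and eq: "\<And>z. x \<le> z \<Longrightarrow> conv a c x z = conv b c x z"
    and "x \<le> z"
  shows "a x z = b x z"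
  using fin \<open>x \<le> z\<close>
proof (induction z rule: interval_induct)
  case (less z)
  have "a x z - b x z = conv a c x z - conv b c x z"
    using conv_diff_eq_top_term[OF fin less.hyps] less.IH unit by simp
  then show ?case using eq[OF less.hyps] by simp
qed

lemma bar_diff: "bar r (\<lambda>u v. p u v - q u v) x z = bar r p x z - bar r q x z"
  unfolding bar_def by (simp add: sum_subtractf[symmetric] diff_monom)

lemma bar_fixed_small_degree_eq_0:
  assumes deg: "2 * int (degree (p x z)) < r x z"
    and fixed: "bar r p x z = p x z"
  shows "p x z = 0"
proof -
  define R where "R = nat (r x z)"
  define d where "d = degree (p x z)"
  have "d < R" "R - (R - d) = d" using deg unfolding R_def d_def by linarith+
  have "coeff (bar r p x z) (R - d) = (\<Sum>k\<le>R. if k = R - d then coeff (p x z) (R - k) else 0)"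
    unfolding bar_def R_def by (simp add: coeff_sum coeff_monom)
  also have "\<dots> = lead_coeff (p x z)"
    using \<open>R - (R - d) = d\<close> by (subst sum.delta) (auto simp: d_def)
  finally have "coeff (p x z) (R - d) = lead_coeff (p x z)" using fixed by simp
  moreover have "coeff (p x z) (R - d) = 0"
    using deg unfolding R_def d_def by (intro coeff_eq_0) linarith
  ultimately show ?thesis by simp
qed

lemma left_KLS_row_unique:
  fixes r :: "'a::order \<Rightarrow> 'a \<Rightarrow> int"
  assumes fin: "\<And>u v::'a. finite {u..v}"
    and kernel: "P_kernel r \<kappa>"
    and g: "left_KLS r \<kappa> g"
    and h: "in_I_half r h"
    and row: "\<And>z. x \<le> z \<Longrightarrow> bar r h x z = conv h \<kappa> x z"
    and "x \<le> z"
  shows "h x z = g x z"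
  using fin \<open>x \<le> z\<close>
proof (induction z rule: interval_induct)
  case (less z)
  show ?case
  proof (cases "x = z")
    case True
    then show ?thesis using h g unfolding left_KLS_def in_I_half_def by simp
  next
    case False
    with less.hyps have "x < z" by simp
    let ?p = "\<lambda>u v. h u v - g u v"
    have "conv h \<kappa> x z - conv g \<kappa> x z = ?p x z"
      using conv_diff_eq_top_term[OF fin less.hyps] less.IH kernel
      unfolding P_kernel_def by simp
    moreover have "bar r g x z = conv g \<kappa> x z"
      using g less.hyps unfolding left_KLS_def by blast
    ultimately have fixed: "bar r ?p x z = ?p x z"
      using row[OF less.hyps] by (simp add: bar_diff)
    have "2 * int (degree (h x z)) < r x z" "2 * int (degree (g x z)) < r x z"
      using h g \<open>x < z\<close> unfolding left_KLS_def in_I_half_def by blast+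
    moreover have "degree (?p x z) \<le> max (degree (h x z)) (degree (g x z))"
      by (rule degree_diff_le_max)
    ultimately have "2 * int (degree (?p x z)) < r x z" by linarith
    then show ?thesis using bar_fixed_small_degree_eq_0 fixed by fastforce
  qed
qed

theorem proposition2p8:
  fixes r :: "'a::order \<Rightarrow> 'a \<Rightarrow> int"
    and \<kappa> f g h :: "'a \<Rightarrow> 'a \<Rightarrow> int poly"
    and x :: 'a
  assumes "weakly_ranked_poset r"
    and "P_kernel r \<kappa>"
    and "right_KLS r \<kappa> f"
    and "left_KLS r \<kappa> g"
    and "in_I_half r h"
    and "\<forall>z. x \<le> z \<longrightarrow> conv (bar r h) f x z = conv h (bar r f) x z"
  shows "\<forall>z. x \<le> z \<longrightarrow> h x z = g x z"
proof -
  have fin: "\<And>u v::'a. finite {u..v}"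
    using assms(1) unfolding weakly_ranked_poset_def locally_finite_def by blast
  have f_unit: "\<And>y. f y y = 1"
    using assms(3) unfolding right_KLS_def in_I_half_def by blast
  have "conv (bar r h) f x z = conv (conv h \<kappa>) f x z" if "x \<le> z" for z
  proof -
    have "conv h (bar r f) x z = conv h (conv \<kappa> f) x z"
      using assms(3) unfolding conv_def[of h] right_KLS_def by (intro sum.cong) auto
    also have "\<dots> = conv (conv h \<kappa>) f x z" by (rule conv_assoc[OF fin])
    finally show ?thesis using assms(6) that by simp
  qed
  then have "bar r h x z = conv h \<kappa> x z" if "x \<le> z" for z
    using that by (rule conv_cancel_right_row[OF fin f_unit])
  then show ?thesis
    using left_KLS_row_unique[OF fin assms(2,4,5)] by blast
qed

end
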